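(* Let $\mu$ be a Borel probability measure on $\mathbb{R}^d$. Suppose there exists a Borel set $E\subseteq\mathbb{R}^d$ with $\mu(E)>0$ and $\mu(E+k)=0$ for all $k\in\mathbb{Z}^d\setminus\{\mathbf{0}\}$. Then $\mathcal{Z}(\mu)=\emptyset$.
   Context: $\widehat{\mu}(\xi)=\int e^{-2\pi i\xi\cdot x}d\mu(x)$ and $\mathcal{Z}(\mu)=\{\xi\in\mathbb{R}^d:\widehat{\mu}(\xi+k)=0\text{ for all }k\in\mathbb{Z}^d\}$. *)

theory Defs
  imports "HOL-Probability.Probability"
begin

text \<open>Points of R^d are modelled as real ^ 'd (d = CARD('d)).
  The integer lattice Z^d: vectors with all coordinates integers.\<close>
definition int_lattice :: "(real ^ 'd) set" where
  "int_lattice = {k. \<forall>i. k $ i \<in> \<int>}"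

definition fourier_meas :: "(real ^ 'd) measure \<Rightarrow> real ^ 'd \<Rightarrow> complex" where
  "fourier_meas \<mu> \<xi> = (CLINT x | \<mu>. cis (- 2 * pi * (\<xi> \<bullet> x)))"

definition fourier_zero_set :: "(real ^ 'd) measure \<Rightarrow> (real ^ 'd) set" where
  "fourier_zero_set \<mu> = {\<xi>. \<forall>k\<in>int_lattice. fourier_meas \<mu> (\<xi> + k) = 0}"

end

theory Submission
  imports Defs
begin

text \<open>
  If \<open>\<xi> \<in> Z(\<mu>)\<close>, the complex measure \<open>exp(-2\<pi>i \<xi>\<cdot>x) d\<mu>(x)\<close> annihilates every character
  \<open>exp(2\<pi>i k\<cdot>x)\<close>, \<open>k \<in> \<int>\<^sup>d\<close>, hence every trigonometric polynomial, hence (Stone-Weierstrass on the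
  torus) every continuous \<open>\<int>\<^sup>d\<close>-periodic function, hence (dominated convergence) the indicator
  of every periodic set \<open>K + \<int>\<^sup>d\<close> with \<open>K\<close> compact. Take \<open>K \<subseteq> E\<close> compact of positive measure on
  which \<open>exp(-2\<pi>i \<xi>\<cdot>x)\<close> stays within sixty degrees of a fixed direction \<open>c \<in> {1, -1, i, -i}\<close>.
  Since the translates \<open>E + k\<close>, \<open>k \<noteq> 0\<close>, are null, \<open>K + \<int>\<^sup>d\<close> and \<open>K\<close> agree almost everywhere,
  so \<open>\<integral>\<^sub>K exp(-2\<pi>i \<xi>\<cdot>x) d\<mu> = 0\<close>; but its component in direction \<open>c\<close> is at least \<open>\<mu>(K)/2 > 0\<close>.
\<close>

lemma cos_eq_cis: "complex_of_real (cos t) = 1/2 * cis t + 1/2 * cis (- t)"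
  by (simp add: complex_eq_iff)

lemma sin_eq_cis: "complex_of_real (sin t) = - \<i>/2 * cis t + \<i>/2 * cis (- t)"
  by (simp add: complex_eq_iff)

(* The hypothesis C \<noteq> {} is needed because infdist y {} = 0. *)
lemma tendsto_indicator_closed:
  fixes C :: "'a::metric_space set"
  assumes "closed C" "C \<noteq> {}"
  shows "(\<lambda>n. max 0 (1 - real (Suc n) * infdist y C)) \<longlonglongrightarrow> indicator C y"
proof (cases "y \<in> C")
  case True
  then show ?thesis
    by simp
next
  case False
  then have d: "infdist y C > 0"
    using in_closed_iff_infdist_zero[OF assms] infdist_nonneg[of y C] by (auto simp: less_le)
  obtain N :: nat where N: "1 / infdist y C < N"
    using reals_Archimedean2 by blast
  have "max 0 (1 - real (Suc n) * infdist y C) = 0" if "n \<ge> N" for n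
  proof -
    have "1 < real N * infdist y C"
      using N d by (simp add: field_simps)
    also have "\<dots> \<le> real (Suc n) * infdist y C"
      using that d by (intro mult_right_mono) auto
    finally show ?thesis
      by simp
  qed
  then have "(\<lambda>n. max 0 (1 - real (Suc n) * infdist y C)) \<longlonglongrightarrow> 0"
    by (intro tendsto_eventually) (auto simp: eventually_sequentially)
  then show ?thesis
    using False by simp
qed

lemma unit_complex_quadrant:
  assumes "norm z = 1"
  shows "\<exists>c\<in>{1, -1, \<i>, -\<i>}. 1/2 < Re (cnj c * z)"
proof (rule ccontr)
  assume "\<not> ?thesis"
  then have "\<bar>Re z\<bar> \<le> 1/2" "\<bar>Im z\<bar> \<le> 1/2"
    by auto
  then have "(Re z)\<^sup>2 \<le> (1/2)\<^sup>2" "(Im z)\<^sup>2 \<le> (1/2)\<^sup>2"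
    using abs_le_square_iff[of "Re z" "1/2"] abs_le_square_iff[of "Im z" "1/2"] by simp_all
  then show False
    using assms cmod_power2[of z] by (simp add: power2_eq_square)
qed

lemma (in finite_measure) measure_pos_inter_finite_cover:
  assumes "finite Q" "E \<subseteq> (\<Union>c\<in>Q. A c)" "E \<in> sets M" "\<And>c. c \<in> Q \<Longrightarrow> A c \<in> sets M"
    and "0 < measure M E"
  shows "\<exists>c\<in>Q. 0 < measure M (E \<inter> A c)"
proof (rule ccontr)
  assume "\<not> ?thesis"
  then have "(\<Sum>c\<in>Q. measure M (E \<inter> A c)) = 0"
    by (simp add: not_less measure_le_0_iff)
  moreover have "measure M E \<le> (\<Sum>c\<in>Q. measure M (E \<inter> A c))"
  proof -
    have "measure M E \<le> measure M (\<Union>c\<in>Q. E \<inter> A c)"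
      using assms(1-4) by (intro finite_measure_mono) auto
    also have "\<dots> \<le> (\<Sum>c\<in>Q. measure M (E \<inter> A c))"
      using assms(1,3,4) by (intro finite_measure_subadditive_finite) auto
    finally show ?thesis .
  qed
  ultimately show False
    using assms(5) by simp
qed

lemma exists_compact_subset_measure_pos:
  fixes M :: "'a::{second_countable_topology, complete_space} measure"
  assumes "finite_measure M" "sets M = sets borel" "B \<in> sets borel" "0 < measure M B"
  shows "\<exists>K. compact K \<and> K \<subseteq> B \<and> 0 < measure M K"
proof -
  interpret finite_measure M
    by fact
  have "0 < emeasure M B"
    using assms(4) by (simp add: emeasure_eq_measure)
  also have "emeasure M B = (SUP K \<in> {K. K \<subseteq> B \<and> compact K}. emeasure M K)"
    by (rule inner_regular[OF assms(2) _ assms(3)]) simp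
  finally obtain K where "K \<subseteq> B" "compact K" "0 < emeasure M K"
    by (auto simp: less_SUP_iff)
  then show ?thesis
    by (auto simp: emeasure_eq_measure)
qed

lemma (in finite_measure) Re_integral_mult_indicator_ge:
  fixes f :: "'a \<Rightarrow> complex"
  assumes f: "integrable M f" and K: "K \<in> sets M" and bound: "\<And>x. x \<in> K \<Longrightarrow> a \<le> Re (f x)"
  shows "a * measure M K \<le> Re (\<integral>x. f x * indicator K x \<partial>M)"
proof -
  have int: "integrable M (\<lambda>x. f x * indicator K x)"
    using integrable_mult_indicator[OF K f] by (simp add: mult.commute scaleR_conv_of_real of_real_indicator)
  have "a * measure M K = (\<integral>x. a * indicator K x \<partial>M)"
    using K by simp
  also have "\<dots> \<le> (\<integral>x. Re (f x * indicator K x) \<partial>M)"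
  proof (rule integral_mono)
    show "integrable M (\<lambda>x. a * indicator K x)"
      using K by (intro integrable_mult_right integrable_real_indicator) (auto simp: emeasure_eq_measure)
    show "integrable M (\<lambda>x. Re (f x * indicator K x))"
      using int by (rule integrable_Re)
    show "a * indicator K x \<le> Re (f x * indicator K x)" for x
      using bound by (auto split: split_indicator)
  qed
  also have "\<dots> = Re (\<integral>x. f x * indicator K x \<partial>M)"
    using int by (rule integral_Re)
  finally show ?thesis .
qed

section \<open>The integer lattice and the torus\<close>

lemma int_lattice_add: "k \<in> int_lattice \<Longrightarrow> l \<in> int_lattice \<Longrightarrow> k + l \<in> int_lattice"
  by (auto simp: int_lattice_def)

lemma int_lattice_uminus: "k \<in> int_lattice \<Longrightarrow> - k \<in> int_lattice"
  by (auto simp: int_lattice_def)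

lemma zero_in_int_lattice: "0 \<in> int_lattice"
  by (auto simp: int_lattice_def)

lemma axis_in_int_lattice: "axis i 1 \<in> int_lattice"
  by (auto simp: int_lattice_def axis_def)

lemma countable_int_lattice: "countable (int_lattice :: (real ^ 'd) set)"
proof -
  have "int_lattice \<subseteq> range (\<lambda>v :: 'd \<Rightarrow> int. \<chi> i. real_of_int (v i))"
  proof
    fix k :: "real ^ 'd"
    assume "k \<in> int_lattice"
    then have "k = (\<chi> i. real_of_int \<lfloor>k $ i\<rfloor>)"
      by (auto simp: int_lattice_def vec_eq_iff elim!: Ints_cases)
    then show "k \<in> range (\<lambda>v :: 'd \<Rightarrow> int. \<chi> i. real_of_int (v i))"
      by (intro image_eqI[where x = "\<lambda>i. \<lfloor>k $ i\<rfloor>"]) simp_all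
  qed
  then show ?thesis
    by (rule countable_subset) simp
qed

text \<open>
  \<open>x \<mapsto> (cos 2\<pi>x\<^sub>i, sin 2\<pi>x\<^sub>i)\<^sub>i\<close> embeds the torus \<open>\<real>\<^sup>d/\<int>\<^sup>d\<close> into the cube \<open>[-1,1]\<^sup>2\<^sup>d\<close>, so that
  Stone-Weierstrass on the cube approximates periodic continuous functions by trigonometric
  polynomials.
\<close>
definition torus_map :: "real ^ 'd \<Rightarrow> (real ^ 'd) \<times> (real ^ 'd)" where
  "torus_map x = ((\<chi> i. cos (2 * pi * x $ i)), (\<chi> i. sin (2 * pi * x $ i)))"

lemma continuous_on_torus_map: "continuous_on A torus_map"
  unfolding torus_map_def by (intro continuous_intros)

lemma torus_map_in_cbox: "torus_map x \<in> cbox (- 1, - 1) (1, 1)"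
  by (auto simp: torus_map_def cbox_Pair_eq mem_box_cart)

lemma torus_map_eq_imp_diff_in_int_lattice:
  assumes "torus_map x = torus_map z"
  shows "x - z \<in> int_lattice"
proof -
  have "(x - z) $ i \<in> \<int>" for i
  proof -
    have "cos (2 * pi * x $ i) = cos (2 * pi * z $ i)" "sin (2 * pi * x $ i) = sin (2 * pi * z $ i)"
      using arg_cong[OF assms, of "\<lambda>p. fst p $ i"] arg_cong[OF assms, of "\<lambda>p. snd p $ i"]
      by (simp_all add: torus_map_def)
    then have "cos (2 * pi * x $ i - 2 * pi * z $ i) = 1"
      using sin_cos_squared_add[of "2 * pi * z $ i"] by (simp add: cos_diff power2_eq_square)
    then obtain n :: int where "2 * pi * x $ i - 2 * pi * z $ i = real_of_int n * 2 * pi"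
      using cos_one_2pi_int by blast
    then have "2 * pi * (x $ i - z $ i) = 2 * pi * real_of_int n"
      by (simp add: algebra_simps)
    then have "x $ i - z $ i = real_of_int n"
      by simp
    then show ?thesis
      by simp
  qed
  then show ?thesis
    by (simp add: int_lattice_def)
qed

lemma torus_map_vimage_image_diff:
  assumes "K \<subseteq> E"
  shows "torus_map -` torus_map ` K - K \<subseteq> (\<Union>k\<in>int_lattice - {0}. (\<lambda>x. x + k) ` E)"
proof
  fix x
  assume x: "x \<in> torus_map -` torus_map ` K - K"
  then obtain z where "z \<in> K" "torus_map x = torus_map z"
    by auto
  then have "x - z \<in> int_lattice - {0}" "x = z + (x - z)" "z \<in> E"
    using torus_map_eq_imp_diff_in_int_lattice x assms by auto
  then show "x \<in> (\<Union>k\<in>int_lattice - {0}. (\<lambda>x. x + k) ` E)"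
    by blast
qed

lemma null_sets_lattice_translates:
  fixes M :: "(real ^ 'd) measure"
  assumes "finite_measure M" "sets M = sets borel" "E \<in> sets borel"
    and null: "\<forall>k\<in>int_lattice. k \<noteq> 0 \<longrightarrow> measure M ((\<lambda>x. x + k) ` E) = 0"
  shows "(\<Union>k\<in>int_lattice - {0}. (\<lambda>x. x + k) ` E) \<in> null_sets M"
proof (rule null_sets_UN')
  show "countable (int_lattice - {0} :: (real ^ 'd) set)"
    using countable_int_lattice by (rule countable_subset[rotated]) auto
next
  fix k :: "real ^ 'd"
  assume k: "k \<in> int_lattice - {0}"
  have "(\<lambda>x. x - k) \<in> borel_measurable borel"
    by (intro borel_measurable_continuous_onI continuous_intros)
  then have "(\<lambda>x. x - k) -` E \<inter> space borel \<in> sets borel"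
    using assms(3) by (rule measurable_sets)
  moreover have "(\<lambda>x. x + k) ` E = (\<lambda>x. x - k) -` E"
    by (force simp: image_iff)
  ultimately have "(\<lambda>x. x + k) ` E \<in> sets M"
    using assms(2) by simp
  moreover have "measure M ((\<lambda>x. x + k) ` E) = 0"
    using null k by auto
  ultimately show "(\<lambda>x. x + k) ` E \<in> null_sets M"
    by (simp add: null_sets_def finite_measure.emeasure_eq_measure[OF assms(1)])
qed

section \<open>Trigonometric polynomials with frequencies in the lattice\<close>

inductive lattice_trig_poly :: "(real ^ 'd \<Rightarrow> complex) \<Rightarrow> bool" where
  character: "k \<in> int_lattice \<Longrightarrow> lattice_trig_poly (\<lambda>x. cis (2 * pi * (k \<bullet> x)))"
| cmult: "lattice_trig_poly p \<Longrightarrow> lattice_trig_poly (\<lambda>x. c * p x)"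
| add: "lattice_trig_poly p \<Longrightarrow> lattice_trig_poly q \<Longrightarrow> lattice_trig_poly (\<lambda>x. p x + q x)"

lemma lattice_trig_poly_const: "lattice_trig_poly (\<lambda>x. c)"
  using lattice_trig_poly.cmult[OF lattice_trig_poly.character[OF zero_in_int_lattice], of c]
  by simp

lemma lattice_trig_poly_character_mult:
  assumes "lattice_trig_poly q" "k \<in> int_lattice"
  shows "lattice_trig_poly (\<lambda>x. cis (2 * pi * (k \<bullet> x)) * q x)"
  using assms
proof (induction q rule: lattice_trig_poly.induct)
  case (character l)
  have "(\<lambda>x. cis (2 * pi * (k \<bullet> x)) * cis (2 * pi * (l \<bullet> x))) = (\<lambda>x. cis (2 * pi * ((k + l) \<bullet> x)))"
    by (simp add: cis_mult inner_add_left distrib_left)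
  then show ?case
    using lattice_trig_poly.character[OF int_lattice_add[OF character.prems character.hyps]]
    by simp
next
  case (cmult p c)
  then show ?case
    using lattice_trig_poly.cmult[OF cmult.IH[OF cmult.prems], of c]
    by (simp add: mult.left_commute)
next
  case (add p q)
  then show ?case
    using lattice_trig_poly.add[OF add.IH] by (simp add: distrib_left)
qed

lemma lattice_trig_poly_mult:
  assumes "lattice_trig_poly p" "lattice_trig_poly q"
  shows "lattice_trig_poly (\<lambda>x. p x * q x)"
  using assms
proof (induction p rule: lattice_trig_poly.induct)
  case (character k)
  then show ?case
    using lattice_trig_poly_character_mult by blast
next
  case (cmult p c)
  then show ?case
    using lattice_trig_poly.cmult[OF cmult.IH[OF cmult.prems], of c] by (simp add: mult.assoc)
next
  case (add p1 p2)
  then show ?case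
    using lattice_trig_poly.add[OF add.IH] by (simp add: distrib_right)
qed

lemma lattice_trig_poly_sum:
  "finite A \<Longrightarrow> (\<And>a. a \<in> A \<Longrightarrow> lattice_trig_poly (p a)) \<Longrightarrow>
    lattice_trig_poly (\<lambda>x. \<Sum>a\<in>A. p a x)"
proof (induction A rule: finite_induct)
  case empty
  then show ?case
    using lattice_trig_poly_const[of 0] by simp
next
  case (insert a A)
  then show ?case
    using lattice_trig_poly.add[of "p a" "\<lambda>x. \<Sum>a\<in>A. p a x"] by simp
qed

lemma lattice_trig_poly_cos_coordinate:
  "lattice_trig_poly (\<lambda>x. complex_of_real (cos (2 * pi * x $ i)))"
proof -
  have "(\<lambda>x. complex_of_real (cos (2 * pi * x $ i))) =
      (\<lambda>x. 1/2 * cis (2 * pi * (axis i 1 \<bullet> x)) + 1/2 * cis (2 * pi * (- axis i 1 \<bullet> x)))"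
    by (simp add: cos_eq_cis inner_axis')
  then show ?thesis
    by (simp only:) (intro lattice_trig_poly.intros axis_in_int_lattice int_lattice_uminus)
qed

lemma lattice_trig_poly_sin_coordinate:
  "lattice_trig_poly (\<lambda>x. complex_of_real (sin (2 * pi * x $ i)))"
proof -
  have "(\<lambda>x. complex_of_real (sin (2 * pi * x $ i))) =
      (\<lambda>x. - \<i>/2 * cis (2 * pi * (axis i 1 \<bullet> x)) + \<i>/2 * cis (2 * pi * (- axis i 1 \<bullet> x)))"
    by (simp add: sin_eq_cis inner_axis')
  then show ?thesis
    by (simp only:) (intro lattice_trig_poly.intros axis_in_int_lattice int_lattice_uminus)
qed

lemma lattice_trig_poly_torus_map_inner_Basis:
  assumes "b \<in> Basis"
  shows "lattice_trig_poly (\<lambda>x. complex_of_real (torus_map x \<bullet> b))"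
proof -
  from assms obtain i where "b = (axis i 1, 0) \<or> b = (0, axis i 1)"
    unfolding Basis_prod_def Basis_vec_def by auto
  then show ?thesis
  proof
    assume "b = (axis i 1, 0)"
    then show ?thesis
      using lattice_trig_poly_cos_coordinate[of i] by (simp add: torus_map_def inner_axis)
  next
    assume "b = (0, axis i 1)"
    then show ?thesis
      using lattice_trig_poly_sin_coordinate[of i] by (simp add: torus_map_def inner_axis)
  qed
qed

lemma lattice_trig_poly_linear_torus_map:
  assumes "bounded_linear l"
  shows "lattice_trig_poly (\<lambda>x. complex_of_real (l (torus_map x)))"
proof -
  interpret l: bounded_linear l by fact
  have l_Basis: "l y = (\<Sum>b\<in>Basis. (y \<bullet> b) * l b)" for y
  proof -
    have "l y = l (\<Sum>b\<in>Basis. (y \<bullet> b) *\<^sub>R b)"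
      by (simp add: euclidean_representation)
    then show ?thesis
      by (simp add: l.sum l.scale)
  qed
  have "(\<lambda>x. complex_of_real (l (torus_map x))) =
      (\<lambda>x. \<Sum>b\<in>Basis. complex_of_real (l b) * complex_of_real (torus_map x \<bullet> b))"
  proof
    fix x
    show "complex_of_real (l (torus_map x)) =
        (\<Sum>b\<in>Basis. complex_of_real (l b) * complex_of_real (torus_map x \<bullet> b))"
      by (subst l_Basis) (simp add: mult.commute)
  qed
  then show ?thesis
    by (auto intro!: lattice_trig_poly_sum lattice_trig_poly.cmult lattice_trig_poly_torus_map_inner_Basis)
qed

lemma lattice_trig_poly_real_polynomial_torus_map:
  "real_polynomial_function r \<Longrightarrow> lattice_trig_poly (\<lambda>x. complex_of_real (r (torus_map x)))"
proof (induction r rule: real_polynomial_function.induct)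
  case (linear f)
  then show ?case by (rule lattice_trig_poly_linear_torus_map)
next
  case (const c)
  then show ?case by (rule lattice_trig_poly_const)
next
  case (add f g)
  then show ?case using lattice_trig_poly.add by fastforce
next
  case (mult f g)
  then show ?case using lattice_trig_poly_mult by fastforce
qed

lemma lattice_trig_poly_polynomial_torus_map:
  fixes p :: "(real ^ 'd) \<times> (real ^ 'd) \<Rightarrow> complex"
  assumes "polynomial_function p"
  shows "lattice_trig_poly (\<lambda>x. p (torus_map x))"
proof -
  have "real_polynomial_function (Re \<circ> p)" "real_polynomial_function (Im \<circ> p)"
    using assms bounded_linear_Re bounded_linear_Im unfolding polynomial_function_def by auto
  then have "lattice_trig_poly (\<lambda>x. complex_of_real (Re (p (torus_map x))) +
      \<i> * complex_of_real (Im (p (torus_map x))))"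
    by (intro lattice_trig_poly.intros lattice_trig_poly_real_polynomial_torus_map[unfolded o_def])
      (simp_all add: o_def)
  moreover have "(\<lambda>x. complex_of_real (Re (p (torus_map x))) +
      \<i> * complex_of_real (Im (p (torus_map x)))) = (\<lambda>x. p (torus_map x))"
    by (simp add: fun_eq_iff complex_eq_iff)
  ultimately show ?thesis
    by simp
qed

section \<open>Weights orthogonal to all lattice characters\<close>

text \<open>
  The weight \<open>w\<close> against \<open>\<mu>\<close> stands for the complex measure \<open>w d\<mu>\<close>; the case of interest is
  \<open>w x = exp(-2\<pi>i \<xi>\<cdot>x)\<close> with \<open>\<xi> \<in> Z(\<mu>)\<close>.
\<close>
locale lattice_orthogonal_weight = finite_measure \<mu>
  for \<mu> :: "(real ^ 'd) measure" +
  fixes w :: "real ^ 'd \<Rightarrow> complex"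
  assumes sets_eq_borel: "sets \<mu> = sets borel"
    and borel_measurable_w: "w \<in> borel_measurable borel"
    and bounded_w: "bounded (range w)"
    and integral_w_mult_character:
      "k \<in> int_lattice \<Longrightarrow> (\<integral>x. w x * cis (2 * pi * (k \<bullet> x)) \<partial>\<mu>) = 0"
begin

lemma borel_measurable_w_mult:
  assumes "f \<in> borel_measurable borel"
  shows "(\<lambda>x. w x * f x) \<in> borel_measurable \<mu>"
proof -
  have "(\<lambda>x. w x * f x) \<in> borel_measurable borel"
    using borel_measurable_w assms by (rule borel_measurable_times)
  then show ?thesis
    by (simp add: measurable_cong_sets[OF sets_eq_borel refl])
qed

lemma integrable_w_mult:
  assumes "f \<in> borel_measurable borel" "\<And>x. norm (f x) \<le> C"
  shows "integrable \<mu> (\<lambda>x. w x * f x)"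
proof -
  obtain B where B: "\<And>x. norm (w x) \<le> B"
    using bounded_w by (auto simp: bounded_iff)
  have "norm (w x * f x) \<le> B * C" for x
    unfolding norm_mult using B assms(2) by (intro mult_mono) (auto intro: order_trans[OF norm_ge_zero])
  then show ?thesis
    by (intro integrable_const_bound[where B = "B * C"] borel_measurable_w_mult assms(1)) auto
qed

lemma integrable_w_mult_lattice_trig_poly:
  "lattice_trig_poly p \<Longrightarrow> integrable \<mu> (\<lambda>x. w x * p x)"
proof (induction p rule: lattice_trig_poly.induct)
  case (character k)
  show ?case
    by (rule integrable_w_mult[where C = 1]) (auto intro!: borel_measurable_continuous_onI continuous_intros)
next
  case (cmult p c)
  then show ?case
    using integrable_mult_right[OF cmult.IH, of c] by (simp add: mult.left_commute)
next
  case (add p q)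
  then show ?case
    by (simp add: distrib_left)
qed

lemma integral_w_mult_lattice_trig_poly:
  "lattice_trig_poly p \<Longrightarrow> (\<integral>x. w x * p x \<partial>\<mu>) = 0"
proof (induction p rule: lattice_trig_poly.induct)
  case (character k)
  then show ?case
    by (rule integral_w_mult_character)
next
  case (cmult p c)
  then show ?case
    by (simp add: mult.left_commute)
next
  case (add p q)
  then show ?case
    using integrable_w_mult_lattice_trig_poly[OF add.hyps(1)] integrable_w_mult_lattice_trig_poly[OF add.hyps(2)]
    by (simp add: distrib_left)
qed

lemma integral_w_mult_continuous_torus:
  fixes G :: "(real ^ 'd) \<times> (real ^ 'd) \<Rightarrow> complex"
  assumes G: "continuous_on UNIV G"
  shows "(\<integral>x. w x * G (torus_map x) \<partial>\<mu>) = 0"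
proof -
  obtain B where B: "B > 0" "\<And>x. norm (w x) \<le> B"
    using bounded_w by (auto simp: bounded_pos)
  define M where "M = measure \<mu> (space \<mu>)"
  have "norm (\<integral>x. w x * G (torus_map x) \<partial>\<mu>) \<le> e" if "e > 0" for e
  proof -
    define \<delta> where "\<delta> = e / (B * M + 1)"
    have "B * M + 1 > 0"
      using B(1) by (intro add_nonneg_pos) (auto simp: M_def)
    then have "\<delta> > 0" "B * M * \<delta> \<le> e"
      using \<open>e > 0\<close> by (simp_all add: \<delta>_def field_simps)
    then obtain p where p: "polynomial_function p" "\<forall>y\<in>cbox (- 1, - 1) (1, 1). norm (G y - p y) < \<delta>"
      using Stone_Weierstrass_polynomial_function[OF compact_cbox continuous_on_subset[OF G subset_UNIV]]
      by blast
    define h where "h x = G (torus_map x) - p (torus_map x)" for x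
    have "h \<in> borel_measurable borel"
      unfolding h_def
      by (intro borel_measurable_continuous_onI continuous_intros continuous_on_compose2[OF G]
          continuous_on_compose2[OF continuous_on_polymonial_function[OF p(1)]] continuous_on_torus_map) auto
    moreover have h_bound: "norm (h x) \<le> \<delta>" for x
      using p(2) torus_map_in_cbox[of x] by (auto simp: h_def intro: less_imp_le)
    ultimately have h_int: "integrable \<mu> (\<lambda>x. w x * h x)"
      by (rule integrable_w_mult)
    have p_trig: "lattice_trig_poly (\<lambda>x. p (torus_map x))"
      by (rule lattice_trig_poly_polynomial_torus_map[OF p(1)])
    have "(\<integral>x. w x * G (torus_map x) \<partial>\<mu>) = (\<integral>x. w x * h x + w x * p (torus_map x) \<partial>\<mu>)"
      by (simp add: h_def algebra_simps)
    also have "\<dots> = (\<integral>x. w x * h x \<partial>\<mu>)"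
      using h_int integrable_w_mult_lattice_trig_poly[OF p_trig] integral_w_mult_lattice_trig_poly[OF p_trig]
      by simp
    also have "norm \<dots> \<le> (\<integral>x. norm (w x * h x) \<partial>\<mu>)"
      by (rule integral_norm_bound)
    also have "\<dots> \<le> (\<integral>x. B * \<delta> \<partial>\<mu>)"
    proof (rule integral_mono)
      show "norm (w x * h x) \<le> B * \<delta>" for x
        unfolding norm_mult using B h_bound by (intro mult_mono) auto
    qed (use h_int in auto)
    also have "\<dots> = B * M * \<delta>"
      by (simp add: M_def)
    finally show ?thesis
      using \<open>B * M * \<delta> \<le> e\<close> by simp
  qed
  then have "norm (\<integral>x. w x * G (torus_map x) \<partial>\<mu>) \<le> 0"
    by (rule dense_ge)
  then show ?thesis
    by simp
qed

lemma integral_w_mult_indicator_closed_torus: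
  assumes C: "closed C"
  shows "(\<integral>x. w x * indicator C (torus_map x) \<partial>\<mu>) = 0"
proof (cases "C = {}")
  case False
  obtain B where B: "\<And>x. norm (w x) \<le> B"
    using bounded_w by (auto simp: bounded_iff)
  define G where "G n y = complex_of_real (max 0 (1 - real (Suc n) * infdist y C))" for n y
  have cont_G: "continuous_on UNIV (G n)" for n
    unfolding G_def by (intro continuous_intros)
  have indicator_torus_borel: "(\<lambda>x. indicator C (torus_map x) :: complex) \<in> borel_measurable borel"
    using C by (intro measurable_compose[OF borel_measurable_continuous_onI[OF continuous_on_torus_map]]
        borel_measurable_indicator) (simp add: borel_closed)
  have "(\<lambda>n. \<integral>x. w x * G n (torus_map x) \<partial>\<mu>) \<longlonglongrightarrow> (\<integral>x. w x * indicator C (torus_map x) \<partial>\<mu>)"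
  proof (rule integral_dominated_convergence[where w = "\<lambda>x. B"])
    show "(\<lambda>x. w x * indicator C (torus_map x)) \<in> borel_measurable \<mu>"
      by (rule borel_measurable_w_mult[OF indicator_torus_borel])
    show "(\<lambda>x. w x * G n (torus_map x)) \<in> borel_measurable \<mu>" for n
      by (intro borel_measurable_w_mult borel_measurable_continuous_onI
          continuous_on_compose2[OF cont_G continuous_on_torus_map]) auto
    have "(\<lambda>n. G n y) \<longlonglongrightarrow> indicator C y" for y
      using tendsto_of_real[where 'a = complex, OF tendsto_indicator_closed[OF C False, of y]]
      by (simp add: G_def of_real_indicator)
    then show "AE x in \<mu>. (\<lambda>n. w x * G n (torus_map x)) \<longlonglongrightarrow> w x * indicator C (torus_map x)"
      by (intro AE_I2 tendsto_mult_left)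
    show "AE x in \<mu>. norm (w x * G n (torus_map x)) \<le> B" for n
    proof (rule AE_I2)
      fix x
      have "norm (G n (torus_map x)) \<le> 1"
        using infdist_nonneg[of "torus_map x" C] by (simp add: G_def)
      then show "norm (w x * G n (torus_map x)) \<le> B"
        unfolding norm_mult using B[of x] by (metis mult_left_le norm_ge_zero order_trans)
    qed
  qed auto
  moreover have "(\<lambda>n. \<integral>x. w x * G n (torus_map x) \<partial>\<mu>) = (\<lambda>n. 0)"
    using integral_w_mult_continuous_torus[OF cont_G] by simp
  ultimately show ?thesis
    using LIMSEQ_unique tendsto_const by metis
qed simp

lemma integral_w_mult_indicator_compact:
  assumes K: "compact K" and N: "N \<in> null_sets \<mu>" "torus_map -` torus_map ` K - K \<subseteq> N"
  shows "(\<integral>x. w x * indicator K x \<partial>\<mu>) = 0"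
proof -
  have closed_image: "closed (torus_map ` K)"
    using K by (intro compact_imp_closed compact_continuous_image continuous_on_torus_map)
  have "AE x in \<mu>. w x * indicator K x = w x * indicator (torus_map ` K) (torus_map x)"
    by (rule AE_I'[OF N(1)]) (use N(2) in \<open>auto split: split_indicator\<close>)
  then have "(\<integral>x. w x * indicator K x \<partial>\<mu>) = (\<integral>x. w x * indicator (torus_map ` K) (torus_map x) \<partial>\<mu>)"
    using K closed_image
    by (intro integral_cong_AE borel_measurable_w_mult borel_measurable_indicator
        measurable_compose[OF borel_measurable_continuous_onI[OF continuous_on_torus_map]])
      (auto simp: borel_closed compact_imp_closed)
  also have "\<dots> = 0"
    by (rule integral_w_mult_indicator_closed_torus[OF closed_image])
  finally show ?thesis .
qed

lemma exists_compact_quadrant_subset: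
  assumes "E \<in> sets borel" "0 < measure \<mu> E" "\<And>x. norm (w x) = 1"
  obtains c K where "compact K" "K \<subseteq> E" "0 < measure \<mu> K" "\<And>x. x \<in> K \<Longrightarrow> 1/2 < Re (cnj c * w x)"
proof -
  define A where "A c = {x. 1/2 < Re (cnj c * w x)}" for c
  have "{x \<in> space borel. 1/2 < Re (cnj c * w x)} \<in> sets borel" for c
    using borel_measurable_w by measurable
  then have A_borel: "A c \<in> sets borel" for c
    by (simp add: A_def)
  moreover have "E \<subseteq> (\<Union>c\<in>{1, -1, \<i>, -\<i>}. A c)"
    using unit_complex_quadrant assms(3) by (auto simp: A_def)
  ultimately obtain c where "0 < measure \<mu> (E \<inter> A c)"
    using measure_pos_inter_finite_cover[of "{1, -1, \<i>, -\<i>}" E A] assms(1,2) sets_eq_borel by auto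
  then obtain K where "compact K" "K \<subseteq> E \<inter> A c" "0 < measure \<mu> K"
    using exists_compact_subset_measure_pos[OF finite_measure_axioms sets_eq_borel] assms(1) A_borel
    by blast
  then show ?thesis
    using that[of K c] by (auto simp: A_def)
qed

lemma no_positive_set_with_null_lattice_translates:
  assumes "\<And>x. norm (w x) = 1" "E \<in> sets borel" "0 < measure \<mu> E"
    and "\<forall>k\<in>int_lattice. k \<noteq> 0 \<longrightarrow> measure \<mu> ((\<lambda>x. x + k) ` E) = 0"
  shows False
proof -
  obtain c K where K: "compact K" "K \<subseteq> E" "0 < measure \<mu> K"
    and quadrant: "\<And>x. x \<in> K \<Longrightarrow> 1/2 < Re (cnj c * w x)"
    using exists_compact_quadrant_subset assms(1-3) by metis
  have "(\<integral>x. w x * indicator K x \<partial>\<mu>) = 0"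
    using null_sets_lattice_translates[OF finite_measure_axioms sets_eq_borel assms(2,4)]
      torus_map_vimage_image_diff[OF K(2)] K(1)
    by (rule integral_w_mult_indicator_compact[rotated])
  moreover have "1/2 * measure \<mu> K \<le> Re (\<integral>x. cnj c * w x * indicator K x \<partial>\<mu>)"
  proof (rule Re_integral_mult_indicator_ge)
    show "integrable \<mu> (\<lambda>x. cnj c * w x)"
      using integrable_w_mult[of "\<lambda>_. cnj c" "norm c"] by (simp add: mult.commute)
    show "K \<in> sets \<mu>"
      using K(1) sets_eq_borel by (simp add: borel_closed compact_imp_closed)
  qed (use quadrant in \<open>auto intro: less_imp_le\<close>)
  ultimately show False
    using K(3) by (simp add: mult.assoc)
qed

end

lemma lattice_orthogonal_weight_fourier_zero_set:
  fixes \<mu> :: "(real ^ 'd) measure"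
  assumes "finite_measure \<mu>" "sets \<mu> = sets borel" "\<xi> \<in> fourier_zero_set \<mu>"
  shows "lattice_orthogonal_weight \<mu> (\<lambda>x. cis (- 2 * pi * (\<xi> \<bullet> x)))"
proof (intro lattice_orthogonal_weight.intro lattice_orthogonal_weight_axioms.intro assms(1,2))
  show "(\<lambda>x. cis (- 2 * pi * (\<xi> \<bullet> x))) \<in> borel_measurable borel"
    by (intro borel_measurable_continuous_onI continuous_intros)
  show "bounded (range (\<lambda>x. cis (- 2 * pi * (\<xi> \<bullet> x))))"
    by (auto simp: bounded_iff)
  fix k :: "real ^ 'd"
  assume "k \<in> int_lattice"
  then have "fourier_meas \<mu> (\<xi> + - k) = 0"
    using assms(3) int_lattice_uminus unfolding fourier_zero_set_def by blast
  moreover have "cis (- 2 * pi * (\<xi> \<bullet> x)) * cis (2 * pi * (k \<bullet> x)) = cis (- 2 * pi * ((\<xi> + - k) \<bullet> x))" for x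
    by (simp add: cis_mult inner_diff_left algebra_simps)
  ultimately show "(\<integral>x. cis (- 2 * pi * (\<xi> \<bullet> x)) * cis (2 * pi * (k \<bullet> x)) \<partial>\<mu>) = 0"
    by (simp add: fourier_meas_def)
qed

theorem theorem1p3:
  fixes \<mu> :: "(real ^ 'd) measure" and E :: "(real ^ 'd) set"
  assumes "prob_space \<mu>"
    and "sets \<mu> = sets borel"
    and "E \<in> sets borel"
    and "measure \<mu> E > 0"
    and "\<forall>k\<in>int_lattice. k \<noteq> 0 \<longrightarrow> measure \<mu> ((\<lambda>x. x + k) ` E) = 0"
  shows "fourier_zero_set \<mu> = {}"
proof -
  have "\<xi> \<notin> fourier_zero_set \<mu>" for \<xi>
  proof
    assume "\<xi> \<in> fourier_zero_set \<mu>"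
    then interpret lattice_orthogonal_weight \<mu> "\<lambda>x. cis (- 2 * pi * (\<xi> \<bullet> x))"
      by (intro lattice_orthogonal_weight_fourier_zero_set prob_space.finite_measure assms(1,2))
    show False
      using no_positive_set_with_null_lattice_translates assms(3-5) by simp
  qed
  then show ?thesis
    by blast
qed

end
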